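(* Let $t$ be a positive integer and let $G$ be a graph on $4t-1$ vertices with $\alpha(G)=2$. If $\mathrm{cm}(G)\le t-1$, then $\omega(G)\le t-4$.
   Context: All graphs are finite and simple. $\alpha(G)$ is the independence number and $\omega(G)$ the clique number. A matching $M$ in $G$ is connected if for every two edges of $M$ there is an edge of $G$ joining an endpoint of one to an endpoint of the other; $\mathrm{cm}(G)$ is the maximum size of a connected matching in $G$. *)

theory Defs
  imports Main
begin

definition graph :: "'a set \<Rightarrow> ('a \<Rightarrow> 'a \<Rightarrow> bool) \<Rightarrow> bool" where
  "graph V E \<longleftrightarrow> finite V \<and> (\<forall>x y. E x y \<longrightarrow> E y x) \<and> (\<forall>x. \<not> E x x)
     \<and> (\<forall>x y. E x y \<longrightarrow> x \<in> V \<and> y \<in> V)"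

definition clique :: "'a set \<Rightarrow> ('a \<Rightarrow> 'a \<Rightarrow> bool) \<Rightarrow> 'a set \<Rightarrow> bool" where
  "clique V E K \<longleftrightarrow> K \<subseteq> V \<and> (\<forall>x\<in>K. \<forall>y\<in>K. x \<noteq> y \<longrightarrow> E x y)"

definition indep_set :: "'a set \<Rightarrow> ('a \<Rightarrow> 'a \<Rightarrow> bool) \<Rightarrow> 'a set \<Rightarrow> bool" where
  "indep_set V E S \<longleftrightarrow> S \<subseteq> V \<and> (\<forall>x\<in>S. \<forall>y\<in>S. \<not> E x y)"

definition clique_number :: "'a set \<Rightarrow> ('a \<Rightarrow> 'a \<Rightarrow> bool) \<Rightarrow> nat" where
  "clique_number V E = Max (card ` {K. clique V E K})"

definition independence_number :: "'a set \<Rightarrow> ('a \<Rightarrow> 'a \<Rightarrow> bool) \<Rightarrow> nat" where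
  "independence_number V E = Max (card ` {S. indep_set V E S})"

text \<open>A matching: a set of edges (as ordered pairs, each edge represented once
  by some orientation) with pairwise disjoint endpoint sets.\<close>
definition matching :: "'a set \<Rightarrow> ('a \<Rightarrow> 'a \<Rightarrow> bool) \<Rightarrow> ('a \<times> 'a) set \<Rightarrow> bool" where
  "matching V E M \<longleftrightarrow> (\<forall>(u,v)\<in>M. E u v)
     \<and> (\<forall>e\<in>M. \<forall>f\<in>M. e \<noteq> f \<longrightarrow> {fst e, snd e} \<inter> {fst f, snd f} = {})"

definition connected_matching :: "'a set \<Rightarrow> ('a \<Rightarrow> 'a \<Rightarrow> bool) \<Rightarrow> ('a \<times> 'a) set \<Rightarrow> bool" where
  "connected_matching V E M \<longleftrightarrow> matching V E M \<and>
     (\<forall>e\<in>M. \<forall>f\<in>M. e \<noteq> f \<longrightarrow> (\<exists>x\<in>{fst e, snd e}. \<exists>y\<in>{fst f, snd f}. E x y))"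

definition cm :: "'a set \<Rightarrow> ('a \<Rightarrow> 'a \<Rightarrow> bool) \<Rightarrow> nat" where
  "cm V E = Max (card ` {M. connected_matching V E M})"

end

theory Submission
  imports Defs
begin

text \<open>Assume \<open>\<omega> \<ge> t - 3\<close>; we build a connected matching with \<open>t\<close> edges. Since
  \<open>\<alpha> \<le> 2\<close>, the non-neighbours of a vertex, and the common non-neighbours of an edge, form
  cliques, so there are at most \<open>\<omega>\<close> of them. If \<open>t \<le> \<omega>\<close>, match \<open>t\<close> vertices of a
  maximum clique greedily to distinct neighbours outside it; the clique makes the matching
  connected. If \<open>\<omega> < t \<le> \<omega> + 3\<close>, the at least \<open>3\<omega> + 3\<close> vertices outside a maximum
  clique \<open>K\<close> contain three disjoint edges such that between any two of them there is both an
  edge and a non-edge. Keep \<open>t - \<omega>\<close> of them. A vertex of \<open>K\<close> misses both ends of at most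
  one kept edge (otherwise the non-edge between the two edges gives an independent triple), so
  every vertex of \<open>K\<close> still has \<open>\<omega>\<close> neighbours outside through which it reaches all kept
  edges, and matching \<open>K\<close> greedily into them yields \<open>t\<close> connected edges.\<close>

lemma card_le_clique_number:
  assumes "finite V" "clique V E K"
  shows "card K \<le> clique_number V E"
proof -
  have "finite {K. clique V E K}"
    by (rule finite_subset[of _ "Pow V"]) (use assms(1) in \<open>auto simp: clique_def\<close>)
  then show ?thesis
    unfolding clique_number_def using assms(2) by (intro Max_ge) auto
qed

lemma exists_maximum_clique:
  assumes "finite V"
  shows "\<exists>K. clique V E K \<and> card K = clique_number V E"
proof -
  have "finite {K. clique V E K}"
    by (rule finite_subset[of _ "Pow V"]) (use assms in \<open>auto simp: clique_def\<close>)
  moreover have "clique V E {}"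
    by (simp add: clique_def)
  ultimately have "clique_number V E \<in> card ` {K. clique V E K}"
    unfolding clique_number_def by (intro Max_in) auto
  then show ?thesis
    by auto
qed

lemma card_le_independence_number:
  assumes "finite V" "indep_set V E S"
  shows "card S \<le> independence_number V E"
proof -
  have "finite {S. indep_set V E S}"
    by (rule finite_subset[of _ "Pow V"]) (use assms(1) in \<open>auto simp: indep_set_def\<close>)
  then show ?thesis
    unfolding independence_number_def using assms(2) by (intro Max_ge) auto
qed

lemma card_le_cm:
  assumes "graph V E" "connected_matching V E M"
  shows "card M \<le> cm V E"
proof -
  have "finite {M. connected_matching V E M}"
    by (rule finite_subset[of _ "Pow (V \<times> V)"])
      (use assms(1) in \<open>fastforce simp: graph_def connected_matching_def matching_def\<close>)+
  then show ?thesis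
    unfolding cm_def using assms(2) by (intro Max_ge) auto
qed

lemma exists_inj_on_selection:
  assumes "finite S" "\<And>a. a \<in> S \<Longrightarrow> finite (A a) \<and> card S \<le> card (A a)"
  shows "\<exists>f. inj_on f S \<and> (\<forall>a\<in>S. f a \<in> A a)"
  using assms
proof (induction S rule: finite_induct)
  case empty
  then show ?case
    by auto
next
  case (insert a S)
  then obtain f where f: "inj_on f S" "\<forall>b\<in>S. f b \<in> A b"
    by fastforce
  have "card (f ` S) < card (A a)"
    using card_image_le[OF insert.hyps(1), of f] insert by fastforce
  then obtain x where x: "x \<in> A a" "x \<notin> f ` S"
    using card_mono[of "f ` S" "A a"] insert.hyps(1) by force
  have "inj_on (f(a := x)) (insert a S)"
    using f(1) x(2) insert.hyps(2) unfolding inj_on_def by (auto split: if_splits)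
  moreover have "\<forall>b\<in>insert a S. (f(a := x)) b \<in> A b"
    using f(2) x(1) insert.hyps(2) by auto
  ultimately show ?case
    by blast
qed

lemma card_endpoints_le:
  assumes "finite F"
  shows "card (fst ` F \<union> snd ` F) \<le> 2 * card F"
proof -
  have "card (fst ` F \<union> snd ` F) \<le> card (fst ` F) + card (snd ` F)"
    by (rule card_Un_le)
  also have "\<dots> \<le> 2 * card F"
    using card_image_le[OF assms, of fst] card_image_le[OF assms, of snd] by linarith
  finally show ?thesis .
qed

definition linked :: "('a \<Rightarrow> 'a \<Rightarrow> bool) \<Rightarrow> 'a \<times> 'a \<Rightarrow> 'a \<times> 'a \<Rightarrow> bool" where
  "linked E e f \<longleftrightarrow> {fst e, snd e} \<inter> {fst f, snd f} = {}
     \<and> (\<exists>x\<in>{fst e, snd e}. \<exists>y\<in>{fst f, snd f}. E x y)"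

lemma linked_commute:
  assumes "\<And>x y. E x y \<Longrightarrow> E y x"
  shows "linked E e f \<longleftrightarrow> linked E f e"
  using assms unfolding linked_def by blast

lemma connected_matching_iff_pairwise_linked:
  "connected_matching V E M \<longleftrightarrow> (\<forall>e\<in>M. E (fst e) (snd e)) \<and> pairwise (linked E) M"
proof -
  have "(\<forall>(u, v)\<in>M. E u v) \<longleftrightarrow> (\<forall>e\<in>M. E (fst e) (snd e))"
    by auto
  then show ?thesis
    unfolding connected_matching_def matching_def pairwise_def linked_def by blast
qed

definition mixed :: "('a \<Rightarrow> 'a \<Rightarrow> bool) \<Rightarrow> 'a \<times> 'a \<Rightarrow> 'a \<times> 'a \<Rightarrow> bool" where
  "mixed E e f \<longleftrightarrow> (\<exists>x\<in>{fst e, snd e}. \<exists>y\<in>{fst f, snd f}. E x y)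
     \<and> (\<exists>x\<in>{fst e, snd e}. \<exists>y\<in>{fst f, snd f}. \<not> E x y)"

lemma mixed_commute:
  assumes "\<And>x y. E x y \<Longrightarrow> E y x"
  shows "mixed E e f \<longleftrightarrow> mixed E f e"
  using assms unfolding mixed_def by blast

definition mixed_matching :: "('a \<Rightarrow> 'a \<Rightarrow> bool) \<Rightarrow> 'a set \<Rightarrow> ('a \<times> 'a) set \<Rightarrow> bool" where
  "mixed_matching E R F \<longleftrightarrow> F \<subseteq> R \<times> R \<and> (\<forall>e\<in>F. E (fst e) (snd e))
     \<and> pairwise (\<lambda>e f. {fst e, snd e} \<inter> {fst f, snd f} = {} \<and> mixed E e f) F"

lemma mixed_matching_subset:
  "mixed_matching E R F \<Longrightarrow> F' \<subseteq> F \<Longrightarrow> mixed_matching E R F'"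
  unfolding mixed_matching_def by (meson pairwise_subset subset_iff)

lemma mixed_matching_finite:
  "mixed_matching E R F \<Longrightarrow> finite R \<Longrightarrow> finite F"
  unfolding mixed_matching_def by (meson finite_SigmaI finite_subset)

lemma mixed_matching_pairwise_linked:
  "mixed_matching E R F \<Longrightarrow> pairwise (linked E) F"
  unfolding mixed_matching_def mixed_def linked_def pairwise_def by blast

lemma mixed_matching_of_three:
  assumes "\<And>x y. E x y \<Longrightarrow> E y x"
    and "distinct [x1, y1, x2, y2, x3, y3]" "{x1, y1, x2, y2, x3, y3} \<subseteq> R"
    and "E x1 y1" "E x2 y2" "E x3 y3"
    and "mixed E (x1, y1) (x2, y2)" "mixed E (x1, y1) (x3, y3)" "mixed E (x2, y2) (x3, y3)"
  shows "mixed_matching E R {(x1, y1), (x2, y2), (x3, y3)} \<and> card {(x1, y1), (x2, y2), (x3, y3)} = 3"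
proof -
  have "mixed E (x2, y2) (x1, y1)" "mixed E (x3, y3) (x1, y1)" "mixed E (x3, y3) (x2, y2)"
    using assms(7-9) mixed_commute[of E] assms(1) by blast+
  then have "pairwise (\<lambda>e f. {fst e, snd e} \<inter> {fst f, snd f} = {} \<and> mixed E e f)
      {(x1, y1), (x2, y2), (x3, y3)}"
    using assms(2,7-9) unfolding pairwise_insert by auto
  moreover have "card {(x1, y1), (x2, y2), (x3, y3)} = 3"
    using assms(2) by simp
  ultimately show ?thesis
    using assms(3-6) unfolding mixed_matching_def by simp
qed

definition partner_candidates ::
    "('a \<Rightarrow> 'a \<Rightarrow> bool) \<Rightarrow> 'a set \<Rightarrow> ('a \<times> 'a) set \<Rightarrow> 'a \<Rightarrow> 'a set" where
  "partner_candidates E K F a = {x. E a x \<and> x \<notin> K \<and> (\<forall>e\<in>F. linked E (a, x) e)}"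

locale alpha_le_2_graph =
  fixes V :: "'a set" and E :: "'a \<Rightarrow> 'a \<Rightarrow> bool"
  assumes graph: "graph V E"
    and alpha_le_2: "independence_number V E \<le> 2"
begin

abbreviation \<omega> :: nat where
  "\<omega> \<equiv> clique_number V E"

lemma finite_V: "finite V"
  and E_sym: "E x y \<Longrightarrow> E y x"
  and E_irrefl: "\<not> E x x"
  and E_in_V: "E x y \<Longrightarrow> x \<in> V \<and> y \<in> V"
  using graph unfolding graph_def by blast+

lemma no_independent_triple:
  assumes "x \<in> V" "y \<in> V" "z \<in> V" "x \<noteq> y" "x \<noteq> z" "y \<noteq> z"
    and "\<not> E x y" "\<not> E x z" "\<not> E y z"
  shows False
proof -
  have "indep_set V E {x, y, z}"
    unfolding indep_set_def using assms E_sym E_irrefl by blast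
  then have "card {x, y, z} \<le> 2"
    using card_le_independence_number[OF finite_V] alpha_le_2 by fastforce
  then show False
    using assms(4-6) by simp
qed

lemma card_clique_le: "clique V E K \<Longrightarrow> card K \<le> \<omega>"
  by (rule card_le_clique_number[OF finite_V])

lemma clique_if_common_nonneighbour:
  assumes "S \<subseteq> V" "v \<in> V" "v \<notin> S" "\<And>x. x \<in> S \<Longrightarrow> \<not> E x v"
  shows "clique V E S"
  unfolding clique_def using assms no_independent_triple by blast

lemma card_nonneighbours_le: "a \<in> V \<Longrightarrow> card {x\<in>V. x \<noteq> a \<and> \<not> E a x} \<le> \<omega>"
  by (intro card_clique_le clique_if_common_nonneighbour[of _ a]) (auto dest: E_sym)

lemma card_common_nonneighbours_le: "E y z \<Longrightarrow> card {x\<in>V. \<not> E x y \<and> \<not> E x z} \<le> \<omega>"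
  by (intro card_clique_le clique_if_common_nonneighbour[of _ y]) (auto dest: E_in_V)

lemma exists_non_edge:
  assumes "S \<subseteq> V" "\<omega> < card S"
  shows "\<exists>x\<in>S. \<exists>y\<in>S. x \<noteq> y \<and> \<not> E x y"
  using card_clique_le[of S] assms unfolding clique_def by force

lemma clique_number_pos: "V \<noteq> {} \<Longrightarrow> 1 \<le> \<omega>"
  using card_clique_le[of "{v}" for v] by (force simp: clique_def)

lemma card_le_card_neighbours_in:
  assumes "S \<subseteq> V" "y \<in> V" "y \<notin> S"
  shows "card S \<le> card {x\<in>S. E y x} + \<omega>"
proof -
  have "S \<subseteq> {x\<in>S. E y x} \<union> {x\<in>V. x \<noteq> y \<and> \<not> E y x}"
    using assms(1,3) by blast
  then have "card S \<le> card ({x\<in>S. E y x} \<union> {x\<in>V. x \<noteq> y \<and> \<not> E y x})"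
    using finite_V assms(1) by (intro card_mono) (auto intro: finite_subset)
  also have "\<dots> \<le> card {x\<in>S. E y x} + card {x\<in>V. x \<noteq> y \<and> \<not> E y x}"
    by (rule card_Un_le)
  finally show ?thesis
    using card_nonneighbours_le[OF assms(2)] by linarith
qed

lemma finite_partner_candidates: "finite (partner_candidates E K F a)"
  by (rule finite_subset[OF _ finite_V]) (auto simp: partner_candidates_def dest: E_in_V)

lemma exists_connected_matching_of_clique:
  assumes K: "clique V E K"
    and F: "mixed_matching E (V - K) F"
    and partners: "\<And>a. a \<in> K \<Longrightarrow> card K \<le> card (partner_candidates E K F a)"
  shows "\<exists>M. connected_matching V E M \<and> card M = card K + card F"
proof -
  have "finite K"
    using K finite_V unfolding clique_def by (blast intro: finite_subset)
  moreover have "finite F"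
    using mixed_matching_finite[OF F] finite_V by simp
  moreover note finite_partner_candidates
  ultimately obtain f where f: "inj_on f K" "\<And>a. a \<in> K \<Longrightarrow> f a \<in> partner_candidates E K F a"
    using exists_inj_on_selection[of K "partner_candidates E K F"] partners by metis
  define M where "M = (\<lambda>a. (a, f a)) ` K \<union> F"
  have star: "pairwise (linked E) ((\<lambda>a. (a, f a)) ` K)"
  proof (rule pairwise_imageI)
    fix a b assume "a \<in> K" "b \<in> K" "a \<noteq> b"
    then show "linked E (a, f a) (b, f b)"
      using f K inj_onD[OF f(1)] unfolding linked_def clique_def partner_candidates_def by auto
  qed
  have cross: "linked E (a, f a) e" "linked E e (a, f a)" if "a \<in> K" "e \<in> F" for a e
    using f(2)[OF that(1)] that(2) linked_commute[of E] E_sym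
    unfolding partner_candidates_def by blast+
  have "pairwise (linked E) M"
    using star mixed_matching_pairwise_linked[OF F] cross unfolding M_def pairwise_def by blast
  moreover have "\<forall>e\<in>M. E (fst e) (snd e)"
    using f(2) F unfolding M_def partner_candidates_def mixed_matching_def by auto
  moreover have "card M = card K + card F"
  proof -
    have "(\<lambda>a. (a, f a)) ` K \<inter> F = {}"
      using F unfolding mixed_matching_def by auto
    then show ?thesis
      unfolding M_def using \<open>finite K\<close> \<open>finite F\<close>
      by (simp add: card_Un_disjoint card_image inj_on_convol_ident)
  qed
  ultimately show ?thesis
    using connected_matching_iff_pairwise_linked by blast
qed

lemma missed_edge_unique:
  assumes "a \<in> V" "a \<notin> R" and F: "mixed_matching E R F"
    and "e \<in> F" "e' \<in> F"
    and "\<forall>y\<in>{fst e, snd e}. \<not> E a y" "\<forall>y\<in>{fst e', snd e'}. \<not> E a y"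
  shows "e = e'"
proof (rule ccontr)
  assume "e \<noteq> e'"
  then obtain p q where "p \<in> {fst e, snd e}" "q \<in> {fst e', snd e'}" "p \<noteq> q" "\<not> E p q"
    using F assms(4,5) unfolding mixed_matching_def mixed_def pairwise_def by blast
  moreover have "p \<in> R" "q \<in> R" "p \<in> V" "q \<in> V"
    using F assms(4,5) calculation(1,2) E_in_V unfolding mixed_matching_def by auto
  ultimately show False
    using no_independent_triple[of a p q] assms by blast
qed

lemma card_vertices_missing_an_edge_le:
  assumes "a \<in> V" "a \<notin> R" "mixed_matching E R F"
  shows "card {x\<in>V. \<exists>e\<in>F. \<forall>y\<in>{a, x}. \<forall>z\<in>{fst e, snd e}. \<not> E y z} \<le> \<omega>"
proof (cases "\<exists>e\<in>F. \<forall>z\<in>{fst e, snd e}. \<not> E a z")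
  case True
  then obtain e0 where e0: "e0 \<in> F" "\<forall>z\<in>{fst e0, snd e0}. \<not> E a z"
    by blast
  have "{x\<in>V. \<exists>e\<in>F. \<forall>y\<in>{a, x}. \<forall>z\<in>{fst e, snd e}. \<not> E y z}
      \<subseteq> {x\<in>V. \<not> E x (fst e0) \<and> \<not> E x (snd e0)}"
    using missed_edge_unique[OF assms _ e0(1) _ e0(2)] by auto
  then have "card {x\<in>V. \<exists>e\<in>F. \<forall>y\<in>{a, x}. \<forall>z\<in>{fst e, snd e}. \<not> E y z}
      \<le> card {x\<in>V. \<not> E x (fst e0) \<and> \<not> E x (snd e0)}"
    using finite_V by (intro card_mono) auto
  also have "\<dots> \<le> \<omega>"
    using assms(3) e0(1) card_common_nonneighbours_le unfolding mixed_matching_def by blast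
  finally show ?thesis .
next
  case False
  then have "{x\<in>V. \<exists>e\<in>F. \<forall>y\<in>{a, x}. \<forall>z\<in>{fst e, snd e}. \<not> E y z} = {}"
    by auto
  then show ?thesis
    by (simp only: card.empty)
qed

lemma diff_subset_partner_candidates_Un:
  assumes "a \<in> K" and F: "mixed_matching E (V - K) F"
  shows "V - K \<subseteq> partner_candidates E K F a \<union> {x\<in>V. x \<noteq> a \<and> \<not> E a x} \<union> (fst ` F \<union> snd ` F)
    \<union> {x\<in>V. \<exists>e\<in>F. \<forall>y\<in>{a, x}. \<forall>z\<in>{fst e, snd e}. \<not> E y z}"
    (is "_ \<subseteq> ?P \<union> ?N \<union> ?X \<union> ?B")
proof
  fix x assume x: "x \<in> V - K"
  show "x \<in> ?P \<union> ?N \<union> ?X \<union> ?B"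
  proof (cases "x \<in> ?P \<union> ?N \<union> ?X")
    case False
    then have "E a x"
      using x assms(1) by auto
    then obtain e where e: "e \<in> F" "\<not> linked E (a, x) e" "x \<notin> ?X"
      using False x unfolding partner_candidates_def by blast
    have "a \<notin> {fst e, snd e}"
      using F e(1) assms(1) unfolding mixed_matching_def by auto
    moreover have "x \<notin> {fst e, snd e}"
      using e(1,3) by auto
    ultimately have "\<forall>y\<in>{a, x}. \<forall>z\<in>{fst e, snd e}. \<not> E y z"
      using e(2) unfolding linked_def by auto
    then show ?thesis
      using x e(1) by blast
  qed blast
qed

lemma card_partner_candidates_ge:
  assumes "a \<in> K" "K \<subseteq> V" and F: "mixed_matching E (V - K) F"
  shows "card (V - K) \<le> card (partner_candidates E K F a) + 2 * \<omega> + 2 * card F"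
proof -
  define P where "P = partner_candidates E K F a"
  define N where "N = {x\<in>V. x \<noteq> a \<and> \<not> E a x}"
  define X where "X = fst ` F \<union> snd ` F"
  define B where "B = {x\<in>V. \<exists>e\<in>F. \<forall>y\<in>{a, x}. \<forall>z\<in>{fst e, snd e}. \<not> E y z}"
  have "finite F"
    using mixed_matching_finite[OF F] finite_V by simp
  then have "finite (P \<union> N \<union> X \<union> B)"
    using finite_V finite_partner_candidates unfolding P_def N_def X_def B_def by simp
  then have "card (V - K) \<le> card (P \<union> N \<union> X \<union> B)"
    using diff_subset_partner_candidates_Un[OF assms(1) F] unfolding P_def N_def X_def B_def
    by (rule card_mono)
  also have "\<dots> \<le> card P + card N + card X + card B"
    using card_Un_le[of "P \<union> N \<union> X" B] card_Un_le[of "P \<union> N" X] card_Un_le[of P N]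
    by linarith
  also have "\<dots> \<le> card P + \<omega> + 2 * card F + \<omega>"
  proof -
    have "a \<in> V"
      using assms(1,2) by blast
    then have "card N \<le> \<omega>"
      unfolding N_def by (rule card_nonneighbours_le)
    moreover have "card B \<le> \<omega>"
      unfolding B_def using \<open>a \<in> V\<close> assms(1) by (intro card_vertices_missing_an_edge_le[OF _ _ F]) auto
    moreover have "card X \<le> 2 * card F"
      unfolding X_def using \<open>finite F\<close> by (rule card_endpoints_le)
    ultimately show ?thesis
      by linarith
  qed
  finally show ?thesis
    unfolding P_def by linarith
qed

lemma neighbour_pair_with_non_edge:
  assumes "T \<subseteq> V" "z \<in> V" "z' \<in> V" "z \<notin> T" "z' \<notin> T" "2 * \<omega> + 1 \<le> card T"
  shows "\<exists>u\<in>T. \<exists>v\<in>T. u \<noteq> v \<and> E z u \<and> E z' v \<and> \<not> (E z' u \<and> E z v \<and> E u v)"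
proof (rule ccontr)
  assume "\<not> ?thesis"
  then have all: "E z' u \<and> E z v \<and> E u v"
    if "u \<in> T" "v \<in> T" "u \<noteq> v" "E z u" "E z' v" for u v
    using that by blast
  define T1 where "T1 = {x\<in>T. E z x}"
  define T2 where "T2 = {x\<in>T. E z' x}"
  have "T \<noteq> {}"
    using assms(6) by auto
  then have "1 \<le> \<omega>"
    using assms(1) clique_number_pos by blast
  then have "2 \<le> card T2"
    using card_le_card_neighbours_in[OF assms(1,3,5)] assms(6) unfolding T2_def by linarith
  have "T1 \<subseteq> T2"
  proof
    fix u assume u: "u \<in> T1"
    have "\<not> T2 \<subseteq> {u}"
      using card_mono[of "{u}" T2] \<open>2 \<le> card T2\<close> by auto
    then obtain v where "v \<in> T2" "v \<noteq> u"
      by blast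
    then show "u \<in> T2"
      using all[of u v] u unfolding T1_def T2_def by auto
  qed
  then have "clique V E T1"
    using assms(1) all unfolding clique_def T1_def T2_def by blast
  then have "card T1 \<le> \<omega>"
    by (rule card_clique_le)
  then show False
    using card_le_card_neighbours_in[OF assms(1,2,4)] assms(6) unfolding T1_def by linarith
qed

lemma exists_mixed_matching_3_if_two_nonneighbours:
  assumes R: "R \<subseteq> V" "3 * \<omega> + 3 \<le> card R"
    and y: "y \<in> R" "z \<in> R" "z' \<in> R" "y \<noteq> z" "y \<noteq> z'" "z \<noteq> z'" "\<not> E y z" "\<not> E y z'"
  shows "\<exists>F. mixed_matching E R F \<and> card F = 3"
proof -
  have "E z z'"
    using no_independent_triple[of y z z'] R(1) y by blast
  define T where "T = {x\<in>R - {y}. E y x}"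
  have "T \<subseteq> V" "y \<notin> T" "z \<notin> T" "z' \<notin> T"
    using R(1) y unfolding T_def by auto
  have "card R - 1 \<le> card T + \<omega>"
    using card_le_card_neighbours_in[of "R - {y}" y] R(1) y(1) unfolding T_def by auto
  then have "2 * \<omega> + 2 \<le> card T"
    using R(2) by linarith
  then obtain u v where uv: "u \<in> T" "v \<in> T" "u \<noteq> v" "E z u" "E z' v"
      and non_edge: "\<not> (E z' u \<and> E z v \<and> E u v)"
    using neighbour_pair_with_non_edge[OF \<open>T \<subseteq> V\<close> _ _ \<open>z \<notin> T\<close> \<open>z' \<notin> T\<close>] R(1) y
    by fastforce
  have "1 \<le> \<omega>"
    using clique_number_pos R(1) y(1) by blast
  moreover have "card {u, v} \<le> 2"
    by (simp add: card_insert_if)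
  ultimately have "\<not> T \<subseteq> {u, v}"
    using card_mono[of "{u, v}" T] \<open>2 * \<omega> + 2 \<le> card T\<close> by auto
  then obtain x where x: "x \<in> T" "x \<noteq> u" "x \<noteq> v"
    by blast
  have "mixed E (z, u) (y, x)"
    using uv(1) y(7) E_sym unfolding mixed_def T_def by fastforce
  moreover have "mixed E (z, u) (z', v)"
    using \<open>E z z'\<close> non_edge E_sym unfolding mixed_def by fastforce
  moreover have "mixed E (y, x) (z', v)"
    using uv(2) y(8) unfolding mixed_def T_def by fastforce
  moreover have "distinct [z, u, y, x, z', v]"
    using uv x y \<open>y \<notin> T\<close> \<open>z \<notin> T\<close> \<open>z' \<notin> T\<close> by auto
  moreover have "{z, u, y, x, z', v} \<subseteq> R" "E y x"
    using uv x y unfolding T_def by auto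
  ultimately show ?thesis
    using mixed_matching_of_three[of E z u y x z' v R] E_sym uv by blast
qed

lemma exists_mixed_matching_3_if_unique_nonneighbours:
  assumes R: "R \<subseteq> V" "\<omega> + 5 \<le> card R"
    and unique: "\<And>y z z'. \<lbrakk>y \<in> R; z \<in> R; z' \<in> R; y \<noteq> z; y \<noteq> z'; z \<noteq> z'; \<not> E y z\<rbrakk> \<Longrightarrow> E y z'"
  shows "\<exists>F. mixed_matching E R F \<and> card F = 3"
proof -
  have non_edge_outside: "\<exists>x\<in>R - set xs. \<exists>x'\<in>R - set xs. x \<noteq> x' \<and> \<not> E x x'"
    if "length xs \<le> 4" for xs
  proof -
    have "card R - card (set xs) \<le> card (R - set xs)"
      by (rule diff_card_le_card_Diff) simp
    then have "\<omega> < card (R - set xs)"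
      using card_length[of xs] that R(2) by linarith
    then show ?thesis
      using exists_non_edge[of "R - set xs"] R(1) by blast
  qed
  obtain y z where yz: "y \<in> R" "z \<in> R" "y \<noteq> z" "\<not> E y z"
    using non_edge_outside[of "[]"] by auto
  obtain u v where uv: "u \<in> R - {y, z}" "v \<in> R - {y, z}" "u \<noteq> v" "\<not> E u v"
    using non_edge_outside[of "[y, z]"] by auto
  obtain p q where pq: "p \<in> R - {y, z, u, v}" "q \<in> R - {y, z, u, v}" "p \<noteq> q" "\<not> E p q"
    using non_edge_outside[of "[y, z, u, v]"] by auto
  have "\<not> E z y" "\<not> E v u"
    using yz(4) uv(4) E_sym by blast+
  then have "E y u" "E y p" "E y v" "E z p" "E z v" "E v q"
    using unique[of y z u] unique[of y z p] unique[of y z v]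
      unique[of z y p] unique[of z y v] unique[of v u q] yz uv pq by auto
  then have "mixed E (y, u) (z, p)" "mixed E (y, u) (v, q)" "mixed E (z, p) (v, q)"
    using yz(4) uv(4) pq(4) unfolding mixed_def by auto
  moreover have "distinct [y, u, z, p, v, q]" "{y, u, z, p, v, q} \<subseteq> R"
    using yz uv pq by auto
  ultimately show ?thesis
    using mixed_matching_of_three[of E y u z p v q R] E_sym \<open>E y u\<close> \<open>E z p\<close> \<open>E v q\<close> by blast
qed

lemma exists_mixed_matching_3:
  assumes "R \<subseteq> V" "3 * \<omega> + 3 \<le> card R"
  shows "\<exists>F. mixed_matching E R F \<and> card F = 3"
proof (cases "\<exists>y\<in>R. \<exists>z\<in>R. \<exists>z'\<in>R. y \<noteq> z \<and> y \<noteq> z' \<and> z \<noteq> z' \<and> \<not> E y z \<and> \<not> E y z'")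
  case True
  then show ?thesis
    using exists_mixed_matching_3_if_two_nonneighbours[OF assms] by blast
next
  case False
  have "R \<noteq> {}"
    using assms(2) by auto
  then have "\<omega> + 5 \<le> card R"
    using clique_number_pos assms by fastforce
  then show ?thesis
    using exists_mixed_matching_3_if_unique_nonneighbours[OF assms(1)] False by blast
qed

lemma clique_diff_subset_partner_candidates:
  assumes "clique V E K0" "K \<subseteq> K0" "a \<in> K"
  shows "K0 - K \<subseteq> partner_candidates E K {} a"
proof
  fix x assume x: "x \<in> K0 - K"
  then have "a \<in> K0" "a \<noteq> x"
    using assms(2,3) by auto
  then show "x \<in> partner_candidates E K {} a"
    using x assms(1) unfolding clique_def partner_candidates_def by simp
qed

lemma card_diff_le_partner_candidates_empty:
  assumes "K \<subseteq> V" "a \<in> K"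
  shows "card (V - K) \<le> card (partner_candidates E K {} a) + \<omega>"
proof -
  have "{x\<in>V - K. E a x} \<subseteq> partner_candidates E K {} a"
    unfolding partner_candidates_def by auto
  then have "card {x\<in>V - K. E a x} \<le> card (partner_candidates E K {} a)"
    by (rule card_mono[OF finite_partner_candidates])
  moreover have "card (V - K) \<le> card {x\<in>V - K. E a x} + \<omega>"
    using assms by (intro card_le_card_neighbours_in) auto
  ultimately show ?thesis
    by linarith
qed

lemma exists_connected_matching_if_le_clique_number:
  assumes "t \<le> \<omega>" "4 * t \<le> card V + 1"
  shows "\<exists>M. connected_matching V E M \<and> card M = t"
proof -
  obtain K0 where K0: "clique V E K0" "card K0 = \<omega>"
    using exists_maximum_clique[OF finite_V] by blast
  moreover have "t \<le> card K0"
    using K0(2) assms(1) by simp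
  ultimately obtain K where K: "K \<subseteq> K0" "card K = t"
    by (meson obtain_subset_with_card_n)
  then have "clique V E K" "K \<subseteq> V"
    using K0(1) unfolding clique_def by blast+
  then have "finite K"
    using finite_V finite_subset by blast
  have partners: "card K \<le> card (partner_candidates E K {} a)" if "a \<in> K" for a
  proof (cases "2 * t \<le> \<omega>")
    case True
    have "card (K0 - K) \<le> card (partner_candidates E K {} a)"
      using clique_diff_subset_partner_candidates[OF K0(1) K(1) that]
      by (rule card_mono[OF finite_partner_candidates])
    moreover have "card (K0 - K) = \<omega> - t"
      using card_Diff_subset[OF \<open>finite K\<close> K(1)] K0(2) K(2) by simp
    ultimately show ?thesis
      using True K(2) by linarith
  next
    case False
    have "card (V - K) = card V - t"
      using card_Diff_subset[OF \<open>finite K\<close> \<open>K \<subseteq> V\<close>] K(2) by simp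
    then show ?thesis
      using card_diff_le_partner_candidates_empty[OF \<open>K \<subseteq> V\<close> that] False assms(2) K(2)
      by linarith
  qed
  have "mixed_matching E (V - K) {}"
    by (simp add: mixed_matching_def)
  then show ?thesis
    using exists_connected_matching_of_clique[OF \<open>clique V E K\<close> _ partners] K(2) by simp
qed

lemma exists_connected_matching_if_gt_clique_number:
  assumes "\<omega> < t" "t \<le> \<omega> + 3" "4 * t \<le> card V + 1"
  shows "\<exists>M. connected_matching V E M \<and> card M = t"
proof -
  obtain K where K: "clique V E K" "card K = \<omega>"
    using exists_maximum_clique[OF finite_V] by blast
  then have "K \<subseteq> V"
    unfolding clique_def by blast
  then have "finite K"
    using finite_V finite_subset by blast
  have card_R: "card (V - K) = card V - \<omega>"
    using card_Diff_subset[OF \<open>finite K\<close> \<open>K \<subseteq> V\<close>] K(2) by simp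
  then have "3 * \<omega> + 3 \<le> card (V - K)"
    using assms(1,3) by linarith
  then obtain F3 where F3: "mixed_matching E (V - K) F3" "card F3 = 3"
    using exists_mixed_matching_3[of "V - K"] by blast
  moreover have "t - \<omega> \<le> card F3"
    using F3(2) assms(2) by linarith
  ultimately obtain F where "F \<subseteq> F3" and card_F: "card F = t - \<omega>"
    by (meson obtain_subset_with_card_n)
  then have F: "mixed_matching E (V - K) F"
    using F3(1) mixed_matching_subset by blast
  have partners: "card K \<le> card (partner_candidates E K F a)" if "a \<in> K" for a
    using card_partner_candidates_ge[OF that \<open>K \<subseteq> V\<close> F] card_R card_F K(2) assms
    by linarith
  show ?thesis
    using exists_connected_matching_of_clique[OF K(1) F partners] K(2) card_F assms(1)
    by simp
qed

end

theorem corollary2p6: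
  fixes V :: "'a set" and E :: "'a \<Rightarrow> 'a \<Rightarrow> bool" and t :: nat
  assumes "graph V E" and "t \<ge> 1" and "card V = 4 * t - 1"
    and "independence_number V E = 2"
    and "cm V E \<le> t - 1"
  shows "int (clique_number V E) \<le> int t - 4"
proof -
  interpret alpha_le_2_graph V E
    using assms(1,4) by unfold_locales simp_all
  have "\<not> t \<le> \<omega> + 3"
  proof
    assume "t \<le> \<omega> + 3"
    moreover have "4 * t \<le> card V + 1"
      using assms(3) by linarith
    ultimately have "\<exists>M. connected_matching V E M \<and> card M = t"
      using exists_connected_matching_if_le_clique_number
        exists_connected_matching_if_gt_clique_number by (cases "t \<le> \<omega>") simp_all
    then obtain M where "connected_matching V E M" "card M = t"
      by blast
    then have "t \<le> cm V E"
      using card_le_cm[OF assms(1)] by metis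
    then show False
      using assms(2,5) by linarith
  qed
  then show ?thesis
    by linarith
qed

end
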